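(* Suppose that in a spherical tiling by angle congruent pentagons some angle value $\theta$ appears at every degree $3$ vertex. Then $\theta$ appears at least twice among the five angles of the pentagon.
   Context: A spherical tiling by angle congruent pentagons is a graph embedded in the sphere whose faces (tiles) are all pentagons, the tiling being edge-to-edge with every vertex of degree at least $3$; each corner of each tile carries a positive real angle, the angles at every vertex sum to $2\pi$, and all tiles have the same multiset of five corner angles (the "pentagon"). An angle value $\theta$ appears at a vertex if some corner at that vertex has angle $\theta$; it appears $k$ times in the pentagon if it has multiplicity $k$ in that multiset. *)

theory Defs
  imports Complex_Main "HOL-Library.Multiset"
begin

text \<open>Combinatorial model of a graph cellularly embedded in the sphere, as a
combinatorial map: a finite set of darts D, a fixed-point-free involution
alpha (the two darts of an edge), a permutation sigma (rotation of darts
around their common vertex).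
Corners of tiles correspond bijectively to darts: the corner d lies at vertex
(sigma-orbit of d) and in tile (face orbit of d).  The surface is the sphere
iff the map is connected and V - E + F = 2.\<close>

definition orb :: "('a \<Rightarrow> 'a) \<Rightarrow> 'a \<Rightarrow> 'a set" where
  "orb f x = range (\<lambda>n. (f ^^ n) x)"

definition vertices :: "'a set \<Rightarrow> ('a \<Rightarrow> 'a) \<Rightarrow> 'a set set" where
  "vertices D \<sigma> = orb \<sigma> ` D"

definition edges :: "'a set \<Rightarrow> ('a \<Rightarrow> 'a) \<Rightarrow> 'a set set" where
  "edges D \<alpha> = orb \<alpha> ` D"

definition faces :: "'a set \<Rightarrow> ('a \<Rightarrow> 'a) \<Rightarrow> ('a \<Rightarrow> 'a) \<Rightarrow> 'a set set" where
  "faces D \<alpha> \<sigma> = orb (\<sigma> \<circ> \<alpha>) ` D"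

definition spherical_map :: "'a set \<Rightarrow> ('a \<Rightarrow> 'a) \<Rightarrow> ('a \<Rightarrow> 'a) \<Rightarrow> bool" where
  "spherical_map D \<alpha> \<sigma> \<longleftrightarrow>
     finite D \<and> D \<noteq> {} \<and>
     bij_betw \<alpha> D D \<and> bij_betw \<sigma> D D \<and>
     (\<forall>d\<in>D. \<alpha> d \<noteq> d \<and> \<alpha> (\<alpha> d) = d) \<and>
     (\<forall>d\<in>D. \<forall>e\<in>D. (d, e) \<in> {(x, y). x \<in> D \<and> (y = \<alpha> x \<or> y = \<sigma> x)}\<^sup>*) \<and>
     int (card (vertices D \<sigma>)) - int (card (edges D \<alpha>)) + int (card (faces D \<alpha> \<sigma>)) = 2"

definition angle_congruent_pentagon_tiling ::
  "'a set \<Rightarrow> ('a \<Rightarrow> 'a) \<Rightarrow> ('a \<Rightarrow> 'a) \<Rightarrow> ('a \<Rightarrow> real) \<Rightarrow> real multiset \<Rightarrow> bool" where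
  "angle_congruent_pentagon_tiling D \<alpha> \<sigma> ang P \<longleftrightarrow>
     spherical_map D \<alpha> \<sigma> \<and>
     (\<forall>F\<in>faces D \<alpha> \<sigma>. card F = 5 \<and> inj_on (orb \<sigma>) F) \<and>
     (\<forall>v\<in>vertices D \<sigma>. card v \<ge> 3) \<and>
     (\<forall>d\<in>D. ang d > 0) \<and>
     (\<forall>v\<in>vertices D \<sigma>. (\<Sum>d\<in>v. ang d) = 2 * pi) \<and>
     (\<forall>F\<in>faces D \<alpha> \<sigma>. image_mset ang (mset_set F) = P)"

definition appears_at :: "('a \<Rightarrow> real) \<Rightarrow> real \<Rightarrow> 'a set \<Rightarrow> bool" where
  "appears_at ang \<theta> v \<longleftrightarrow> (\<exists>d\<in>v. ang d = \<theta>)"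

end

theory Submission
  imports Defs
begin

text \<open>Let \<open>F\<close>, \<open>E\<close>, \<open>V\<close> be the numbers of tiles, edges and vertices and \<open>V\<^sub>3\<close> the number of
degree 3 vertices. Counting corners gives \<open>5F = 2E\<close> and \<open>2E \<ge> 3V\<^sub>3 + 4(V - V\<^sub>3)\<close>; with
Euler's formula \<open>V - E + F = 2\<close> this yields \<open>V\<^sub>3 \<ge> F + 8\<close>. Distinct degree 3 vertices have
distinct corners of angle \<open>\<theta>\<close>, and there are exactly \<open>mF\<close> such corners, \<open>m\<close> being the
multiplicity of \<open>\<theta>\<close> in the pentagon. So \<open>F + 8 \<le> mF\<close>, forcing \<open>m \<ge> 2\<close>.\<close>

lemma self_in_orb: "x \<in> orb f x"
  unfolding orb_def by (metis funpow_0 rangeI)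

lemma orb_subset:
  assumes "bij_betw f D D" and "x \<in> D"
  shows "orb f x \<subseteq> D"
  unfolding orb_def using bij_betw_apply[OF bij_betw_funpow[OF assms(1)] assms(2)] by auto

lemma orb_trans:
  assumes "y \<in> orb f x"
  shows "orb f y \<subseteq> orb f x"
proof
  fix z assume "z \<in> orb f y"
  then obtain n k where "z = (f ^^ n) y" and "y = (f ^^ k) x"
    using assms unfolding orb_def by auto
  then have "z = (f ^^ (n + k)) x" by (simp add: funpow_add)
  then show "z \<in> orb f x" unfolding orb_def by auto
qed

lemma funpow_periodic:
  assumes "finite D" and "bij_betw f D D" and "x \<in> D"
  obtains p where "p > 0" and "(f ^^ p) x = x"
proof -
  let ?h = "\<lambda>n. (f ^^ n) x"
  have "range ?h \<subseteq> D" using orb_subset[OF assms(2,3)] unfolding orb_def .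
  then have "\<not> inj ?h" using assms(1) finite_imageD finite_subset by blast
  then obtain a b where "a < b" and ab: "?h a = ?h b"
    unfolding inj_def by (metis linorder_neqE_nat)
  have "(f ^^ a) ((f ^^ (b - a)) x) = (f ^^ a) x"
    using \<open>a < b\<close> ab by (metis funpow_add le_add_diff_inverse less_imp_le o_apply)
  moreover have "inj_on (f ^^ a) D" using bij_betw_funpow[OF assms(2)] bij_betw_def by blast
  moreover have "(f ^^ (b - a)) x \<in> D" using bij_betw_apply[OF bij_betw_funpow[OF assms(2)] assms(3)] .
  ultimately have "(f ^^ (b - a)) x = x" using assms(3) by (meson inj_on_def)
  then show ?thesis using that[of "b - a"] \<open>a < b\<close> by simp
qed

lemma orb_eq:
  assumes "finite D" and "bij_betw f D D" and "x \<in> D" and "y \<in> orb f x"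
  shows "orb f y = orb f x"
proof
  show "orb f y \<subseteq> orb f x" using orb_trans[OF assms(4)] .
  obtain k where k: "y = (f ^^ k) x" using assms(4) unfolding orb_def by auto
  obtain p where "p > 0" and p: "(f ^^ p) x = x" using funpow_periodic[OF assms(1-3)] .
  have "(f ^^ (p * k - k)) y = (f ^^ (p * k - k + k)) x"
    by (simp add: k funpow_add)
  also have "\<dots> = (f ^^ (p * k)) x" using \<open>p > 0\<close> by simp
  also have "\<dots> = x" using funpow_mod_eq[OF p, of "p * k"] by simp
  finally have "x \<in> orb f y" unfolding orb_def by (metis rangeI)
  then show "orb f x \<subseteq> orb f y" by (rule orb_trans)
qed

lemma orbs_disjoint:
  assumes "finite D" and "bij_betw f D D"
  shows "pairwise disjnt (orb f ` D)"
  unfolding pairwise_def disjnt_def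
  using orb_eq[OF assms] by blast

lemma Union_orbs: "bij_betw f D D \<Longrightarrow> \<Union> (orb f ` D) = D"
  using orb_subset self_in_orb by fast

lemma sum_over_orbs:
  assumes "finite D" and "bij_betw f D D"
  shows "(\<Sum>d\<in>D. g d) = (\<Sum>A\<in>orb f ` D. \<Sum>d\<in>A. g d)"
proof -
  have "finite A" if "A \<in> orb f ` D" for A
    using that orb_subset[OF assms(2)] assms(1) finite_subset by blast
  then have "(\<Sum>d\<in>\<Union> (orb f ` D). g d) = (\<Sum>A\<in>orb f ` D. \<Sum>d\<in>A. g d)"
    using orbs_disjoint[OF assms] sum.Union_disjoint[of "orb f ` D" g]
    by (simp add: pairwise_def disjnt_def o_def)
  then show ?thesis using Union_orbs[OF assms(2)] by simp
qed

lemma card_eq_sum_card_orbs: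
  assumes "finite D" and "bij_betw f D D"
  shows "card D = (\<Sum>A\<in>orb f ` D. card A)"
proof -
  have "card (\<Union> (orb f ` D)) = (\<Sum>A\<in>orb f ` D. card A)"
    using orbs_disjoint[OF assms] orb_subset[OF assms(2)] assms(1) finite_subset
    by (intro card_Union_disjoint) blast+
  then show ?thesis using Union_orbs[OF assms(2)] by simp
qed

lemma card_le_card_if_disjoint_family_meets:
  assumes "pairwise disjnt \<A>" and "\<forall>A\<in>\<A>. A \<inter> T \<noteq> {}" and "finite T"
  shows "card \<A> \<le> card T"
proof -
  define g where "g A = (SOME t. t \<in> A \<inter> T)" for A
  have g: "g A \<in> A \<inter> T" if "A \<in> \<A>" for A
    using assms(2) that unfolding g_def by (metis some_in_eq)
  have "inj_on g \<A>"
  proof (rule inj_onI)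
    fix A B assume "A \<in> \<A>" "B \<in> \<A>" "g A = g B"
    then have "g A \<in> A \<inter> B" using g[of A] g[of B] by simp
    then have "\<not> disjnt A B" by (auto simp: disjnt_def)
    then show "A = B" using assms(1) \<open>A \<in> \<A>\<close> \<open>B \<in> \<A>\<close> unfolding pairwise_def by blast
  qed
  moreover have "g ` \<A> \<subseteq> T" using g by blast
  ultimately show ?thesis using card_inj_on_le[OF _ _ assms(3)] by blast
qed

context
  fixes D :: "'a set" and \<alpha> \<sigma> :: "'a \<Rightarrow> 'a" and ang :: "'a \<Rightarrow> real" and P :: "real multiset"
  assumes tiling: "angle_congruent_pentagon_tiling D \<alpha> \<sigma> ang P"
begin

lemma finite_darts: "finite D"
  and bij_edge_involution: "bij_betw \<alpha> D D"
  and bij_vertex_rotation: "bij_betw \<sigma> D D"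
  using tiling unfolding angle_congruent_pentagon_tiling_def spherical_map_def by simp_all

lemma bij_face_rotation: "bij_betw (\<sigma> \<circ> \<alpha>) D D"
  using bij_betw_trans[OF bij_edge_involution bij_vertex_rotation] .

lemma card_darts_eq_5_card_faces: "card D = 5 * card (faces D \<alpha> \<sigma>)"
  using card_eq_sum_card_orbs[OF finite_darts bij_face_rotation] tiling
  unfolding angle_congruent_pentagon_tiling_def faces_def by simp

lemma card_darts_eq_2_card_edges: "card D = 2 * card (edges D \<alpha>)"
proof -
  have "card (orb \<alpha> d) = 2" if "d \<in> D" for d
  proof -
    have inv: "\<alpha> (\<alpha> d) = d" and "\<alpha> d \<noteq> d"
      using tiling that unfolding angle_congruent_pentagon_tiling_def spherical_map_def by auto
    have "(\<alpha> ^^ n) d \<in> {d, \<alpha> d}" for n by (induction n) (use inv in auto)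
    then have "orb \<alpha> d \<subseteq> {d, \<alpha> d}" unfolding orb_def by auto
    moreover have "\<alpha> d \<in> orb \<alpha> d" unfolding orb_def using rangeI[of "\<lambda>n. (\<alpha> ^^ n) d" 1] by simp
    ultimately have "orb \<alpha> d = {d, \<alpha> d}" using self_in_orb[of d \<alpha>] by auto
    with \<open>\<alpha> d \<noteq> d\<close> show ?thesis by simp
  qed
  then have "(\<Sum>A\<in>edges D \<alpha>. card A) = (\<Sum>A\<in>edges D \<alpha>. 2)"
    unfolding edges_def by (intro sum.cong) auto
  then show ?thesis
    using card_eq_sum_card_orbs[OF finite_darts bij_edge_involution] unfolding edges_def by simp
qed

lemma four_card_vertices_le:
  "4 * card (vertices D \<sigma>) \<le> card D + card {v\<in>vertices D \<sigma>. card v = 3}"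
proof -
  let ?V = "vertices D \<sigma>" and ?V3 = "{v\<in>vertices D \<sigma>. card v = 3}"
  have fin: "finite ?V" unfolding vertices_def using finite_darts by simp
  have deg: "card v \<ge> 3" if "v \<in> ?V" for v
    using tiling that unfolding angle_congruent_pentagon_tiling_def by blast
  have "4 * card ?V = (\<Sum>v\<in>?V. 4)" by simp
  also have "\<dots> \<le> (\<Sum>v\<in>?V. card v + (if card v = 3 then 1 else 0))"
    using deg by (intro sum_mono) fastforce
  also have "\<dots> = (\<Sum>v\<in>?V. card v) + card ?V3"
    using fin by (simp add: sum.distrib sum.If_cases Int_def)
  also have "(\<Sum>v\<in>?V. card v) = card D"
    using card_eq_sum_card_orbs[OF finite_darts bij_vertex_rotation] unfolding vertices_def ..
  finally show ?thesis .
qed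

lemma card_degree3_vertices_ge: "card (faces D \<alpha> \<sigma>) + 8 \<le> card {v\<in>vertices D \<sigma>. card v = 3}"
proof -
  have "int (card (vertices D \<sigma>)) - int (card (edges D \<alpha>)) + int (card (faces D \<alpha> \<sigma>)) = 2"
    using tiling unfolding angle_congruent_pentagon_tiling_def spherical_map_def by blast
  then show ?thesis using four_card_vertices_le card_darts_eq_5_card_faces card_darts_eq_2_card_edges
    by linarith
qed

lemma card_corners_with_angle: "card {d\<in>D. ang d = \<theta>} = card (faces D \<alpha> \<sigma>) * count P \<theta>"
proof -
  let ?c = "\<lambda>d. if ang d = \<theta> then 1 else 0 :: nat"
  have card_filter: "card {d\<in>A. ang d = \<theta>} = (\<Sum>d\<in>A. ?c d)" if "finite A" for A
    using that by (simp add: sum.If_cases Int_def)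
  have per_face: "(\<Sum>d\<in>A. ?c d) = count P \<theta>" if "A \<in> faces D \<alpha> \<sigma>" for A
  proof -
    have "finite A" and "image_mset ang (mset_set A) = P"
      using tiling that unfolding angle_congruent_pentagon_tiling_def by (auto intro: card_ge_0_finite)
    then have "count P \<theta> = card {d\<in>A. ang d = \<theta>}" by (simp add: count_image_mset' eq_commute)
    with card_filter[OF \<open>finite A\<close>] show ?thesis by simp
  qed
  have "card {d\<in>D. ang d = \<theta>} = (\<Sum>d\<in>D. ?c d)"
    using card_filter[OF finite_darts] .
  also have "\<dots> = (\<Sum>A\<in>faces D \<alpha> \<sigma>. \<Sum>d\<in>A. ?c d)"
    using sum_over_orbs[OF finite_darts bij_face_rotation] unfolding faces_def .
  also have "\<dots> = (\<Sum>A\<in>faces D \<alpha> \<sigma>. count P \<theta>)"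
    using per_face by simp
  finally show ?thesis by simp
qed

lemma card_degree3_vertices_le_corners:
  assumes "\<forall>v\<in>vertices D \<sigma>. card v = 3 \<longrightarrow> appears_at ang \<theta> v"
  shows "card {v\<in>vertices D \<sigma>. card v = 3} \<le> card {d\<in>D. ang d = \<theta>}"
proof (rule card_le_card_if_disjoint_family_meets)
  show "pairwise disjnt {v\<in>vertices D \<sigma>. card v = 3}"
    using orbs_disjoint[OF finite_darts bij_vertex_rotation]
    unfolding vertices_def by (auto simp: pairwise_def)
  show "\<forall>v\<in>{v\<in>vertices D \<sigma>. card v = 3}. v \<inter> {d\<in>D. ang d = \<theta>} \<noteq> {}"
    using assms orb_subset[OF bij_vertex_rotation] unfolding vertices_def appears_at_def by blast
qed (use finite_darts in simp)

end

theorem lemma3: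
  fixes D :: "'a set" and \<alpha> \<sigma> :: "'a \<Rightarrow> 'a" and ang :: "'a \<Rightarrow> real"
    and P :: "real multiset" and \<theta> :: real
  assumes "angle_congruent_pentagon_tiling D \<alpha> \<sigma> ang P"
    and "\<forall>v\<in>vertices D \<sigma>. card v = 3 \<longrightarrow> appears_at ang \<theta> v"
  shows "count P \<theta> \<ge> 2"
proof -
  let ?F = "card (faces D \<alpha> \<sigma>)"
  have "?F + 8 \<le> card {v\<in>vertices D \<sigma>. card v = 3}"
    by (rule card_degree3_vertices_ge[OF assms(1)])
  also have "\<dots> \<le> card {d\<in>D. ang d = \<theta>}"
    by (rule card_degree3_vertices_le_corners[OF assms])
  also have "\<dots> = ?F * count P \<theta>"
    by (rule card_corners_with_angle[OF assms(1)])
  finally have bound: "?F + 8 \<le> ?F * count P \<theta>" .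
  show ?thesis
  proof (rule ccontr)
    assume "\<not> count P \<theta> \<ge> 2"
    then have "?F * count P \<theta> \<le> ?F * 1" by (intro mult_le_mono2) simp
    with bound show False by simp
  qed
qed

end
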